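(* Let $T\in\mathcal M_n$, and let $f,g:[0,\infty)\to[0,\infty)$ be continuous with $f(t)g(t)=t$ for all $t\ge0$. Then \[\pm\mathfrak RT\le\Big(\frac{f^2(|T|)+f^2(|T^*|)}{2}\Big)\sharp\Big(\frac{g^2(|T|)+g^2(|T^*|)}{2}\Big)\quad\text{and}\quad \pm\mathfrak IT\le\Big(\frac{f^2(|T|)+f^2(|T^*|)}{2}\Big)\sharp\Big(\frac{g^2(|T|)+g^2(|T^*|)}{2}\Big).\] In particular, $\pm\mathfrak RT\le\frac{|T|+|T^*|}{2}$ and $\pm\mathfrak IT\le\frac{|T|+|T^*|}{2}$.
   Context: $\mathcal M_n$ denotes the algebra of $n\times n$ complex matrices. $X\ge Y$ means $X-Y$ is positive semidefinite. $|X|=(X^*X)^{1/2}$; functions of positive semidefinite matrices are defined by functional calculus. $\mathfrak RT=\frac{T+T^*}{2}$, $\mathfrak IT=\frac{T-T^*}{2i}$. For positive definite $A,B$, $A\sharp B=A^{1/2}(A^{-1/2}BA^{-1/2})^{1/2}A^{1/2}$; for positive semidefinite $A,B$, $A\sharp B=\lim_{\varepsilon\to0^+}(A+\varepsilon I)\sharp(B+\varepsilon I)$. *)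

theory Defs
  imports "HOL-Analysis.Analysis" "HOL-Computational_Algebra.Polynomial"
begin

text \<open>Complex n x n matrices are rendered as complex^'n^'n (dimension = CARD('n)).\<close>

definition cadj :: "complex^'n^'m \<Rightarrow> complex^'m^'n" where
  "cadj A = (\<chi> i j. cnj (A $ j $ i))"

definition psd :: "complex^'n^'n \<Rightarrow> bool" where
  "psd A \<longleftrightarrow> (\<forall>x::complex^'n.
      Im (\<Sum>i\<in>UNIV. cnj (x $ i) * (A *v x) $ i) = 0 \<and>
      0 \<le> Re (\<Sum>i\<in>UNIV. cnj (x $ i) * (A *v x) $ i))"

definition loewner_le :: "complex^'n^'n \<Rightarrow> complex^'n^'n \<Rightarrow> bool" where
  "loewner_le X Y \<longleftrightarrow> psd (Y - X)"

fun mpow :: "'a::semiring_1^'n^'n \<Rightarrow> nat \<Rightarrow> 'a^'n^'n" where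
  "mpow A 0 = mat 1"
| "mpow A (Suc k) = A ** mpow A k"

definition poly_mat :: "complex poly \<Rightarrow> complex^'n^'n \<Rightarrow> complex^'n^'n" where
  "poly_mat p A = (\<Sum>i\<le>degree p. mat (coeff p i) ** mpow A i)"

definition mspec :: "complex^'n^'n \<Rightarrow> complex set" where
  "mspec A = {l. \<exists>x. x \<noteq> 0 \<and> A *v x = l *s x}"

text \<open>Functional calculus for Hermitian (in particular psd) matrices:
  f(A) = p(A) for any polynomial p interpolating f on the spectrum of A.\<close>
definition matfun :: "(real \<Rightarrow> real) \<Rightarrow> complex^'n^'n \<Rightarrow> complex^'n^'n" where
  "matfun f A = (SOME B. \<exists>p. (\<forall>l\<in>mspec A. poly p l = complex_of_real (f (Re l)))
                             \<and> B = poly_mat p A)"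

definition mabs :: "complex^'n^'n \<Rightarrow> complex^'n^'n" where
  "mabs T = matfun sqrt (cadj T ** T)"

definition gmean_pd :: "complex^'n^'n \<Rightarrow> complex^'n^'n \<Rightarrow> complex^'n^'n" where
  "gmean_pd A B = matfun sqrt A
      ** matfun sqrt (matfun (\<lambda>t. inverse (sqrt t)) A ** B ** matfun (\<lambda>t. inverse (sqrt t)) A)
      ** matfun sqrt A"

definition gmean :: "complex^'n^'n \<Rightarrow> complex^'n^'n \<Rightarrow> complex^'n^'n" where
  "gmean A B = Lim (at_right (0::real))
      (\<lambda>e. gmean_pd (A + e *\<^sub>R mat 1) (B + e *\<^sub>R mat 1))"

definition re_part :: "complex^'n^'n \<Rightarrow> complex^'n^'n" where
  "re_part T = (\<chi> i j. (T $ i $ j + cnj (T $ j $ i)) / 2)"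

definition im_part :: "complex^'n^'n \<Rightarrow> complex^'n^'n" where
  "im_part T = (\<chi> i j. (T $ i $ j - cnj (T $ j $ i)) / (2 * \<i>))"

end

theory Submission
  imports Defs
begin

text \<open>
  If \<open>F(s) G(s) = s\<close>, the block matrix \<open>[[F(T\<^sup>*T), T\<^sup>*], [T, G(TT\<^sup>*)]]\<close> is positive
  semidefinite: with \<open>\<Phi> = F(T\<^sup>*T)\<^sup>1\<^sup>/\<^sup>2\<close> one factors \<open>T = Y\<^sup>*\<Phi>\<close> with
  \<open>Y\<^sup>*Y \<le> G(TT\<^sup>*)\<close>. Averaging this block with the one for \<open>T\<^sup>*\<close> gives a positive block
  \<open>[[A, \<Re>T], [\<Re>T, B]]\<close> with \<open>A, B\<close> the means of \<open>F\<close> and \<open>G\<close> over \<open>|T|\<^sup>2\<close>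
  and \<open>|T\<^sup>*|\<^sup>2\<close>. For positive definite \<open>A\<close>, \<open>A \<sharp> B\<close> is the largest Hermitian
  \<open>X\<close> with \<open>[[A, X], [X, B]] \<ge> 0\<close>: the congruence by \<open>A\<^sup>-\<^sup>1\<^sup>/\<^sup>2\<close> reduces this to
  \<open>Y\<^sup>2 \<le> R\<^sup>2 \<Longrightarrow> Y \<le> R\<close> for \<open>R \<ge> 0\<close>. Passing to the limit \<open>\<epsilon> \<down> 0\<close>
  gives \<open>\<Re>T \<le> A \<sharp> B\<close>; replacing \<open>X\<close> by \<open>-X\<close> and \<open>T\<close> by \<open>-iT\<close> covers
  \<open>-\<Re>T\<close> and \<open>\<plusminus>\<Im>T\<close>. For \<open>f = g = \<surd>\<close> the two diagonal blocks coincide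
  and \<open>[[P, X], [X, P]] \<ge> 0\<close> directly gives \<open>\<plusminus>X \<le> P\<close>.
\<close>

section \<open>Hermitian forms on \<open>complex^'n\<close>\<close>

definition cinner :: "complex^'n \<Rightarrow> complex^'n \<Rightarrow> complex" where
  "cinner x y = (\<Sum>i\<in>UNIV. cnj (x$i) * y$i)"

definition hermitian :: "complex^'n^'n \<Rightarrow> bool" where
  "hermitian A \<longleftrightarrow> cadj A = A"

definition qform :: "complex^'n^'n \<Rightarrow> complex^'n \<Rightarrow> real" where
  "qform A x = Re (cinner x (A *v x))"

lemma psd_iff_cinner: "psd A \<longleftrightarrow> (\<forall>x. Im (cinner x (A *v x)) = 0 \<and> 0 \<le> qform A x)"
  by (simp add: psd_def cinner_def qform_def)

lemma cinner_matrix_vector: "cinner x (A *v y) = cinner (cadj A *v x) y"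
proof -
  have "cinner x (A *v y) = (\<Sum>i\<in>UNIV. \<Sum>j\<in>UNIV. cnj (x$i) * A$i$j * y$j)"
    unfolding cinner_def matrix_vector_mult_def by (simp add: sum_distrib_left mult.assoc)
  also have "\<dots> = (\<Sum>j\<in>UNIV. \<Sum>i\<in>UNIV. cnj (x$i) * A$i$j * y$j)"
    by (rule sum.swap)
  also have "\<dots> = cinner (cadj A *v x) y"
    unfolding cinner_def matrix_vector_mult_def cadj_def by (simp add: sum_distrib_left mult_ac)
  finally show ?thesis .
qed

lemma cinner_add_right: "cinner x (y + z) = cinner x y + cinner x z"
  by (simp add: cinner_def algebra_simps sum.distrib)

lemma cinner_add_left: "cinner (x + y) z = cinner x z + cinner y z"
  by (simp add: cinner_def algebra_simps sum.distrib)

lemma cinner_diff_right: "cinner x (y - z) = cinner x y - cinner x z"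
  by (simp add: cinner_def algebra_simps sum_subtractf)

lemma cinner_minus_right: "cinner x (- y) = - cinner x y"
  by (simp add: cinner_def sum_negf)

lemma cinner_minus_left: "cinner (- x) y = - cinner x y"
  by (simp add: cinner_def sum_negf)

lemma cinner_scale_right: "cinner x (c *s y) = c * cinner x y"
  by (simp add: cinner_def sum_distrib_left mult_ac)

lemma cinner_scale_left: "cinner (c *s x) y = cnj c * cinner x y"
  by (simp add: cinner_def sum_distrib_left mult_ac)

lemma cinner_zero_right [simp]: "cinner x 0 = 0"
  by (simp add: cinner_def)

lemma cinner_zero_left [simp]: "cinner 0 x = 0"
  by (simp add: cinner_def)

lemma cinner_commute: "cinner y x = cnj (cinner x y)"
  by (simp add: cinner_def mult.commute)

lemma Re_cinner: "Re (cinner x y) = inner x y"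
  by (simp add: cinner_def inner_vec_def Re_sum inner_complex_def algebra_simps)

lemma cinner_self: "cinner x x = complex_of_real ((norm x)^2)"
proof -
  have "cinner x x = (\<Sum>i\<in>UNIV. complex_of_real ((cmod (x$i))^2))"
    unfolding cinner_def by (intro sum.cong refl) (metis complex_norm_square mult.commute of_real_power)
  also have "(\<Sum>i\<in>UNIV. complex_of_real ((cmod (x$i))^2)) = complex_of_real ((norm x)^2)"
    unfolding norm_vec_def L2_set_def by (simp add: sum_nonneg)
  finally show ?thesis .
qed

lemma cinner_self_eq_0_iff: "cinner x x = 0 \<longleftrightarrow> x = 0"
  by (simp add: cinner_self)

lemma norm_add_square: "(norm (a + b))^2 = (norm a)^2 + 2 * Re (cinner b a) + (norm b)^2"
proof -
  have "complex_of_real ((norm (a + b))^2) = cinner (a + b) (a + b)"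
    by (simp add: cinner_self)
  also have "\<dots> = cinner a a + cinner a b + cinner b a + cinner b b"
    by (simp add: cinner_add_left cinner_add_right)
  finally have "(norm (a + b))^2 = Re (cinner a a) + Re (cinner a b) + Re (cinner b a) + Re (cinner b b)"
    by (metis Re_complex_of_real plus_complex.sel(1))
  moreover have "Re (cinner a b) = Re (cinner b a)"
    by (metis cinner_commute complex_cnj_cancel_iff cnj.sel(1))
  ultimately show ?thesis by (simp add: cinner_self)
qed

lemma vec_scaleR_nth: "(r *\<^sub>R y) $ i = complex_of_real r * (y $ i)"
  by (metis vector_scaleR_component scaleR_conv_of_real)

lemma matrix_scaleR_nth: "(r *\<^sub>R A) $ i $ j = complex_of_real r * (A $ i $ j)"
  by (metis vector_scaleR_component scaleR_conv_of_real)

lemma scaleR_eq_scalar_mult: "r *\<^sub>R (x::complex^'n) = complex_of_real r *s x"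
  by (simp add: vec_eq_iff vector_scalar_mult_def vec_scaleR_nth del: vector_scaleR_component)

lemma matrix_vector_mult_scaleR: "(r *\<^sub>R (A::complex^_^_)) *v x = r *\<^sub>R (A *v x)"
proof -
  have "((r *\<^sub>R A) *v x) $ i = (r *\<^sub>R (A *v x)) $ i" for i
    unfolding vec_scaleR_nth
    by (simp add: matrix_vector_mult_def matrix_scaleR_nth sum_distrib_left mult.assoc
        del: vector_scaleR_component)
  thus ?thesis by (simp add: vec_eq_iff del: vector_scaleR_component)
qed

lemma matrix_vector_mult_uminus_right: "(A::complex^'n^'m) *v (- x) = - (A *v x)"
  by (simp add: matrix_vector_mult_def vec_eq_iff sum_negf)

lemma matrix_vector_mult_uminus_left: "(- A::complex^'n^'m) *v x = - (A *v x)"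
  by (simp add: matrix_vector_mult_def vec_eq_iff sum_negf)

lemma cinner_scaleR_right: "cinner x (r *\<^sub>R y) = of_real r * cinner x y"
  by (simp add: scaleR_eq_scalar_mult cinner_scale_right)

lemma cadj_cadj [simp]: "cadj (cadj A) = A"
  by (simp add: cadj_def vec_eq_iff)

lemma cadj_zero [simp]: "cadj 0 = 0"
  by (simp add: cadj_def vec_eq_iff)

lemma cadj_mult: "cadj (A ** B) = cadj B ** cadj A"
  by (simp add: cadj_def matrix_matrix_mult_def vec_eq_iff mult.commute)

lemma cadj_add: "cadj (A + B) = cadj A + cadj B"
  by (simp add: cadj_def vec_eq_iff)

lemma cadj_diff: "cadj (A - B) = cadj A - cadj B"
  by (simp add: cadj_def vec_eq_iff)

lemma cadj_uminus: "cadj (- A) = - cadj A"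
  by (simp add: cadj_def vec_eq_iff)

lemma cadj_mat: "cadj (mat c) = mat (cnj c)"
  by (simp add: cadj_def mat_def vec_eq_iff)

lemma cadj_scaleR: "cadj (r *\<^sub>R A) = r *\<^sub>R cadj A"
  by (simp add: cadj_def vec_eq_iff)

lemma hermitian_cinner: "hermitian A \<Longrightarrow> cinner x (A *v y) = cinner (A *v x) y"
  by (metis cinner_matrix_vector hermitian_def)

lemma hermitian_Im_cinner: "hermitian A \<Longrightarrow> Im (cinner x (A *v x)) = 0"
  by (metis cinner_commute complex_cnj_cancel_iff hermitian_cinner Reals_cnj_iff complex_is_Real_iff)

lemma hermitian_add: "hermitian A \<Longrightarrow> hermitian B \<Longrightarrow> hermitian (A + B)"
  by (simp add: hermitian_def cadj_add)

lemma hermitian_diff: "hermitian A \<Longrightarrow> hermitian B \<Longrightarrow> hermitian (A - B)"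
  by (simp add: hermitian_def cadj_diff)

lemma hermitian_uminus: "hermitian A \<Longrightarrow> hermitian (- A)"
  by (simp add: hermitian_def cadj_uminus)

lemma hermitian_scaleR: "hermitian A \<Longrightarrow> hermitian (r *\<^sub>R A)"
  by (simp add: hermitian_def cadj_scaleR)

lemma hermitian_mat_of_real: "hermitian (mat (complex_of_real r))"
  by (simp add: hermitian_def cadj_mat)

lemma hermitian_cadj_mult: "hermitian (cadj A ** A)"
  by (simp add: hermitian_def cadj_mult)

lemma hermitian_mult_cadj: "hermitian (A ** cadj A)"
  by (simp add: hermitian_def cadj_mult)

lemma hermitian_congruence: "hermitian C \<Longrightarrow> hermitian B \<Longrightarrow> hermitian (C ** B ** C)"
  by (simp add: hermitian_def cadj_mult matrix_mul_assoc)

lemma qform_add: "qform (A + B) x = qform A x + qform B x"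
  by (simp add: qform_def matrix_vector_mult_add_rdistrib cinner_add_right)

lemma qform_diff: "qform (A - B) x = qform A x - qform B x"
  by (simp add: qform_def matrix_vector_mult_diff_rdistrib cinner_diff_right)

lemma qform_scaleR: "qform (r *\<^sub>R A) x = r * qform A x"
  by (simp add: qform_def matrix_vector_mult_scaleR cinner_scaleR_right)

lemma qform_mat_1: "qform (mat 1) x = (norm x)^2"
  by (simp add: qform_def cinner_self)

lemma qform_scalar_mult: "qform B (complex_of_real r *s x) = r^2 * qform B x"
  by (simp add: qform_def vector_scalar_commute cinner_scale_left cinner_scale_right
      power2_eq_square)

lemma qform_scaleR_vector: "qform B (r *\<^sub>R x) = r^2 * qform B x"
  by (simp add: scaleR_eq_scalar_mult qform_scalar_mult)

lemma qform_uminus_vector: "qform B (- x) = qform B x"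
  by (simp add: qform_def matrix_vector_mult_uminus_right cinner_minus_left cinner_minus_right)

lemma qform_add_vector:
  assumes "hermitian B"
  shows "qform B (x + y) = qform B x + 2 * Re (cinner y (B *v x)) + qform B y"
proof -
  have "cinner x (B *v y) = cnj (cinner y (B *v x))"
    using assms by (metis cinner_commute hermitian_cinner)
  thus ?thesis
    by (simp add: qform_def matrix_vector_right_distrib cinner_add_left cinner_add_right)
qed

lemma qform_cadj_mult: "qform (cadj B ** B) x = (norm (B *v x))^2"
  by (simp add: qform_def cinner_matrix_vector matrix_vector_mul_assoc[symmetric] cinner_self)

lemma qform_hermitian_square: "hermitian R \<Longrightarrow> qform (R ** R) x = (norm (R *v x))^2"
  by (metis qform_cadj_mult hermitian_def)

lemma qform_congruence: "hermitian C \<Longrightarrow> qform (C ** B ** C) x = qform B (C *v x)"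
  by (simp add: qform_def matrix_vector_mul_assoc[symmetric] hermitian_cinner)

lemma cinner_congruence:
  "hermitian C \<Longrightarrow> cinner v ((C ** B ** C) *v u) = cinner (C *v v) (B *v (C *v u))"
  by (simp add: matrix_vector_mul_assoc[symmetric] hermitian_cinner)

lemma psd_iff_qform: "hermitian A \<Longrightarrow> psd A \<longleftrightarrow> (\<forall>x. 0 \<le> qform A x)"
  by (simp add: psd_iff_cinner hermitian_Im_cinner)

lemma continuous_on_qform: "continuous_on X (qform H)"
proof -
  have "qform H = (\<lambda>y. inner y (H *v y))" by (simp add: fun_eq_iff qform_def Re_cinner)
  moreover have "continuous_on X (\<lambda>y. H *v (y::complex^_))"
    by (simp add: linear_continuous_on linear_linear)
  ultimately show ?thesis by (auto intro: continuous_intros)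
qed

section \<open>Polynomials in a matrix\<close>

lemma mat_mult_left: "mat c ** X = (\<chi> i j. c * X $ i $ j)"
  by (simp add: mat_def matrix_matrix_mult_def vec_eq_iff if_distrib if_distribR sum.delta
      cong: if_cong)

lemma mat_mult_right: "X ** mat c = (\<chi> i j. X $ i $ j * (c::'a::comm_semiring_1))"
  by (simp add: mat_def matrix_matrix_mult_def vec_eq_iff if_distrib if_distribR sum.delta'
      cong: if_cong)

lemma mat_mult_commute: "mat (c::'a::comm_semiring_1) ** X = X ** mat c"
  by (simp add: mat_mult_left mat_mult_right mult.commute)

lemma mat_mult_mat: "mat (a::'a::comm_semiring_1) ** mat b = mat (a * b)"
  unfolding mat_mult_left by (simp add: vec_eq_iff mat_def)

lemma mat_add_mat: "mat (a::'a::comm_semiring_1) + mat b = mat (a + b)"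
  by (simp add: vec_eq_iff mat_def)

lemma mat_mult_assoc_left: "mat (c::'a::comm_semiring_1) ** (A ** B) = A ** (mat c ** B)"
  by (metis mat_mult_commute matrix_mul_assoc)

lemma mat_matrix_vector_mult: "mat c *v x = c *s x"
  by (simp add: mat_def matrix_vector_mult_def vec_eq_iff vector_scalar_mult_def if_distrib
      if_distribR sum.delta cong: if_cong)

lemma matrix_mul_sum_right: "A ** sum f S = (\<Sum>i\<in>S. A ** f i)"
  by (induct S rule: infinite_finite_induct) (simp_all add: matrix_add_ldistrib)

lemma matrix_add_rdistrib: "(B + C) ** A = B ** A + C ** A"
  by (simp add: matrix_matrix_mult_def vec_eq_iff algebra_simps sum.distrib)

lemma poly_mat_bound:
  assumes "degree p \<le> N"
  shows "poly_mat p A = (\<Sum>i\<le>N. mat (coeff p i) ** mpow A i)"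
proof -
  have "(\<Sum>i\<le>N. mat (coeff p i) ** mpow A i) = (\<Sum>i\<le>degree p. mat (coeff p i) ** mpow A i)"
    by (rule sum.mono_neutral_right) (use assms in \<open>auto simp: coeff_eq_0\<close>)
  thus ?thesis by (simp add: poly_mat_def)
qed

lemma poly_mat_0 [simp]: "poly_mat 0 A = 0"
  by (simp add: poly_mat_def)

lemma poly_mat_pCons: "poly_mat (pCons a p) A = mat a + A ** poly_mat p A"
proof -
  have "poly_mat (pCons a p) A = (\<Sum>i\<le>Suc (degree p). mat (coeff (pCons a p) i) ** mpow A i)"
    by (rule poly_mat_bound) (simp add: degree_pCons_le)
  also have "\<dots> = mat a + (\<Sum>i\<le>degree p. mat (coeff p i) ** (A ** mpow A i))"
    by (simp add: sum.atMost_Suc_shift del: sum.atMost_Suc)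
  also have "\<dots> = mat a + A ** poly_mat p A"
    by (simp add: poly_mat_def matrix_mul_sum_right mat_mult_assoc_left)
  finally show ?thesis .
qed

lemma poly_mat_const: "poly_mat [:c:] A = mat c"
  by (simp add: poly_mat_pCons)

lemma poly_mat_x: "poly_mat [:0, 1:] A = A"
  by (simp add: poly_mat_pCons)

lemma poly_mat_add: "poly_mat (p + q) A = poly_mat p A + poly_mat q A"
proof (induct p arbitrary: q)
  case 0 thus ?case by simp
next
  case (pCons a p)
  obtain b q' where q: "q = pCons b q'" by (cases q)
  show ?case using pCons(2)[of q'] unfolding q
    by (simp add: poly_mat_pCons matrix_add_ldistrib algebra_simps mat_add_mat[symmetric])
qed

lemma poly_mat_smult: "poly_mat (smult c p) A = mat c ** poly_mat p A"
  by (induct p) (simp_all add: poly_mat_pCons matrix_add_ldistrib mat_mult_mat mat_mult_assoc_left)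

lemma poly_mat_mult: "poly_mat (p * q) A = poly_mat p A ** poly_mat q A"
  by (induct p) (simp_all add: poly_mat_pCons poly_mat_add poly_mat_smult matrix_add_rdistrib
      matrix_mul_assoc)

lemma poly_mat_diff: "poly_mat (p - q) A = poly_mat p A - poly_mat q A"
  by (metis add_diff_cancel poly_mat_add diff_add_cancel)

lemma poly_mat_pcompose: "poly_mat (pcompose q p) A = poly_mat q (poly_mat p A)"
  by (induct q) (simp_all add: pcompose_pCons poly_mat_add poly_mat_mult poly_mat_const
      poly_mat_pCons)

lemma poly_mat_commute: "A ** poly_mat p A = poly_mat p A ** A"
  by (metis mult.commute poly_mat_mult poly_mat_x)

lemma poly_mat_intertwine: "B ** poly_mat p (C ** B) = poly_mat p (B ** C) ** B"
  by (induct p) (simp_all add: poly_mat_pCons matrix_add_ldistrib matrix_add_rdistrib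
      mat_mult_commute[of _ B] matrix_mul_assoc[symmetric])

lemma poly_mat_eigenvector: "A *v v = l *s v \<Longrightarrow> poly_mat p A *v v = poly p l *s v"
proof (induct p)
  case 0 thus ?case by (simp add: vec_eq_iff vector_scalar_mult_def)
next
  case (pCons a p)
  have "poly_mat (pCons a p) A *v v = a *s v + A *v (poly p l *s v)"
    using pCons by (simp add: poly_mat_pCons matrix_vector_mult_add_rdistrib mat_matrix_vector_mult
        matrix_vector_mul_assoc[symmetric])
  also have "A *v (poly p l *s v) = poly p l *s (A *v v)"
    by (rule vector_scalar_commute)
  finally show ?case using pCons(3)
    by (simp add: vec_eq_iff vector_scalar_mult_def algebra_simps)
qed

lemma cadj_poly_mat: "cadj (poly_mat p A) = poly_mat (map_poly cnj p) (cadj A)"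
  by (induct p) (simp_all add: poly_mat_pCons cadj_add cadj_mult cadj_mat map_poly_pCons
      poly_mat_commute)

lemma lagrange_interpolation:
  fixes v :: "complex \<Rightarrow> complex"
  assumes fin: "finite L"
  shows "\<exists>p. \<forall>l\<in>L. poly p l = v l"
proof -
  define c where "c l = v l / (\<Prod>m\<in>L-{l}. (l - m))" for l
  define p where "p = (\<Sum>l\<in>L. smult (c l) (\<Prod>m\<in>L-{l}. [:-m, 1:]))"
  have "poly p k = v k" if k: "k \<in> L" for k
  proof -
    have "poly p k = (\<Sum>l\<in>L. c l * (\<Prod>m\<in>L-{l}. (k - m)))"
      unfolding p_def poly_sum by (simp add: poly_prod)
    also have "\<dots> = c k * (\<Prod>m\<in>L-{k}. (k - m)) + (\<Sum>l\<in>L-{k}. c l * (\<Prod>m\<in>L-{l}. (k - m)))"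
      by (rule sum.remove[OF fin k])
    also have "(\<Sum>l\<in>L-{k}. c l * (\<Prod>m\<in>L-{l}. (k - m))) = 0"
      using fin k by (intro sum.neutral ballI) (auto simp: prod_zero_iff)
    also have "(\<Prod>m\<in>L-{k}. (k - m)) \<noteq> 0" using fin by (simp add: prod_zero_iff)
    hence "c k * (\<Prod>m\<in>L-{k}. (k - m)) = v k" by (simp add: c_def)
    finally show ?thesis by simp
  qed
  thus ?thesis by blast
qed

section \<open>Spectrum of a Hermitian matrix\<close>

lemma hermitian_eigenvalue_cnj:
  assumes "hermitian A" "A *v x = l *s x" "x \<noteq> 0"
  shows "cnj l = l"
proof -
  have "l * cinner x x = cinner x (A *v x)" using assms(2) by (simp add: cinner_scale_right)
  also have "\<dots> = cinner (A *v x) x" by (rule hermitian_cinner[OF assms(1)])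
  also have "\<dots> = cnj l * cinner x x" by (simp add: assms(2) cinner_scale_left)
  finally show ?thesis using assms(3) by (simp add: cinner_self_eq_0_iff)
qed

lemma mspec_hermitian_real: "hermitian A \<Longrightarrow> l \<in> mspec A \<Longrightarrow> l = complex_of_real (Re l)"
proof -
  assume "hermitian A" "l \<in> mspec A"
  hence "cnj l = l" unfolding mspec_def using hermitian_eigenvalue_cnj by blast
  hence "Im l = 0" by (metis cnj.sel(2) neg_equal_zero)
  thus ?thesis by (simp add: complex_eq_iff)
qed

lemma hermitian_eigenvectors_orthogonal:
  assumes "hermitian A" "A *v x = l *s x" "A *v y = m *s y" "x \<noteq> 0" "l \<noteq> m"
  shows "cinner x y = 0"
proof -
  have "m * cinner x y = cinner x (A *v y)" using assms(3) by (simp add: cinner_scale_right)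
  also have "\<dots> = cinner (A *v x) y" by (rule hermitian_cinner[OF assms(1)])
  also have "\<dots> = l * cinner x y"
    using hermitian_eigenvalue_cnj[OF assms(1,2,4)] by (simp add: assms(2) cinner_scale_left)
  finally show ?thesis using assms(5) by simp
qed

lemma finite_mspec:
  assumes "hermitian A"
  shows "finite (mspec A)"
proof -
  define ev where "ev l = (SOME x. x \<noteq> 0 \<and> A *v x = l *s x)" for l
  have ev: "ev l \<noteq> 0 \<and> A *v ev l = l *s ev l" if "l \<in> mspec A" for l
    unfolding ev_def using that unfolding mspec_def by (rule CollectE) (rule someI_ex)
  have orth: "cinner (ev l) (ev m) = 0" if "l \<in> mspec A" "m \<in> mspec A" "l \<noteq> m" for l m
    using hermitian_eigenvectors_orthogonal[OF assms] ev that by blast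
  have "inj_on ev (mspec A)"
  proof (rule inj_onI, rule ccontr)
    fix l m assume "l \<in> mspec A" "m \<in> mspec A" "ev l = ev m" "l \<noteq> m"
    thus False using orth[of l m] ev[of l] by (simp add: cinner_self_eq_0_iff)
  qed
  moreover have "pairwise orthogonal (ev ` mspec A)"
    unfolding pairwise_def orthogonal_def Re_cinner[symmetric] using orth by fastforce
  hence "independent (ev ` mspec A)"
    by (rule pairwise_orthogonal_independent) (use ev in auto)
  hence "finite (ev ` mspec A)" by (rule independent_imp_finite)
  ultimately show ?thesis by (rule finite_imageD[rotated])
qed

lemma mspec_lower_bound:
  assumes "\<forall>x. c * (norm x)^2 \<le> qform H x" and "l \<in> mspec H"
  shows "c \<le> Re l"
proof -
  from assms(2) obtain v where v: "v \<noteq> 0" "H *v v = l *s v" unfolding mspec_def by blast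
  have "qform H v = Re l * (norm v)^2"
    by (simp add: qform_def v(2) cinner_scale_right cinner_self)
  hence "c * (norm v)^2 \<le> Re l * (norm v)^2" using assms(1) by metis
  thus ?thesis using v(1) by simp
qed

definition complex_subspace :: "(complex^'n) set \<Rightarrow> bool" where
  "complex_subspace S \<longleftrightarrow> 0 \<in> S \<and> (\<forall>x\<in>S. \<forall>y\<in>S. x + y \<in> S) \<and> (\<forall>c. \<forall>x\<in>S. c *s x \<in> S)"

lemma complex_subspace_imp_subspace: "complex_subspace S \<Longrightarrow> subspace S"
  unfolding complex_subspace_def subspace_def by (simp add: scaleR_eq_scalar_mult)

lemma quadratic_nonneg_imp_linear_coeff_0:
  fixes a d :: real
  assumes "\<forall>t. 0 \<le> 2 * t * a + t^2 * d" "d \<ge> 0"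
  shows "a = 0"
proof (rule ccontr)
  assume "a \<noteq> 0"
  define t where "t = - a / (d + 1)"
  have te: "t * (d + 1) = - a" using assms(2) by (simp add: t_def)
  have "(2 * t * a + t^2 * d) * (d + 1)^2 = 2 * a * (d + 1) * (t * (d + 1)) + d * (t * (d + 1))^2"
    by (simp add: algebra_simps power2_eq_square)
  also have "\<dots> = - (a^2 * (d + 2))" unfolding te by (simp add: algebra_simps power2_eq_square)
  also have "\<dots> < 0" using \<open>a \<noteq> 0\<close> assms(2) by (simp add: mult_pos_pos)
  finally have "(2 * t * a + t^2 * d) * (d + 1)^2 < 0" .
  moreover have "(d + 1)^2 > 0" using assms(2) by simp
  ultimately have "2 * t * a + t^2 * d < 0" by (simp add: mult_less_0_iff)
  thus False using assms(1) by (metis not_le)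
qed

text \<open>\<open>x\<close> minimises the form on \<open>S\<close>, so \<open>B x\<close> is orthogonal to \<open>S\<close>; being in \<open>S\<close>,
  it vanishes.\<close>

lemma qform_zero_imp_kernel:
  assumes hB: "hermitian B" and S: "complex_subspace S" and x: "x \<in> S" "B *v x \<in> S"
    and pos: "\<forall>y\<in>S. 0 \<le> qform B y" and zero: "qform B x = 0"
  shows "B *v x = 0"
proof -
  define w where "w = B *v x"
  have Re0: "Re (cinner y w) = 0" if "y \<in> S" for y
  proof -
    have "\<forall>t. 0 \<le> 2 * t * Re (cinner y w) + t^2 * qform B y"
    proof
      fix t :: real
      have "x + t *\<^sub>R y \<in> S"
        using S x that complex_subspace_imp_subspace subspace_add subspace_scale by blast
      hence "0 \<le> qform B (x + t *\<^sub>R y)" using pos by blast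
      thus "0 \<le> 2 * t * Re (cinner y w) + t^2 * qform B y"
        by (simp add: qform_add_vector[OF hB] zero qform_scaleR_vector qform_scalar_mult w_def scaleR_eq_scalar_mult
            cinner_scale_left)
    qed
    thus ?thesis using pos that by (blast intro: quadratic_nonneg_imp_linear_coeff_0)
  qed
  have "cinner y w = 0" if "y \<in> S" for y
  proof -
    have "\<i> *s y \<in> S" using S that unfolding complex_subspace_def by blast
    hence "Im (cinner y w) = 0" using Re0[of "\<i> *s y"] by (simp add: cinner_scale_left)
    thus ?thesis using Re0[OF that] by (simp add: complex_eq_iff)
  qed
  hence "cinner w w = 0" using x(2) unfolding w_def by blast
  thus ?thesis unfolding w_def by (simp add: cinner_self_eq_0_iff)
qed

lemma hermitian_max_eigenvector:
  assumes H: "hermitian H" and S: "complex_subspace S" and inv: "\<forall>x\<in>S. H *v x \<in> S"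
    and ne: "\<exists>x\<in>S. x \<noteq> 0"
  obtains x \<mu> where "x \<in> S" "x \<noteq> 0" "H *v x = complex_of_real \<mu> *s x"
    "\<forall>y\<in>S. qform H y \<le> \<mu> * (norm y)^2"
proof -
  have subS: "subspace S" by (rule complex_subspace_imp_subspace[OF S])
  define K where "K = S \<inter> sphere 0 1"
  have "compact K" unfolding K_def by (simp add: closed_Int_compact closed_subspace[OF subS])
  moreover from ne obtain x0 where "x0 \<in> S" "x0 \<noteq> 0" by blast
  hence "(1 / norm x0) *\<^sub>R x0 \<in> K" unfolding K_def using subspace_scale[OF subS] by auto
  ultimately obtain x where x: "x \<in> K" and xmax: "\<forall>y\<in>K. qform H y \<le> qform H x"
    using continuous_attains_sup[OF _ _ continuous_on_qform] by blast
  define \<mu> where "\<mu> = qform H x"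
  have xS: "x \<in> S" and nx: "norm x = 1" using x unfolding K_def by auto
  have bound: "qform H y \<le> \<mu> * (norm y)^2" if "y \<in> S" for y
  proof (cases "y = 0")
    case False
    hence "(1 / norm y) *\<^sub>R y \<in> K" unfolding K_def using that subspace_scale[OF subS] by auto
    hence "qform H ((1 / norm y) *\<^sub>R y) \<le> \<mu>" using xmax \<mu>_def by blast
    hence "(1 / norm y)^2 * qform H y \<le> \<mu>" by (simp add: qform_scaleR_vector)
    thus ?thesis using False by (simp add: field_simps power2_eq_square)
  qed (simp add: qform_def)
  define B where "B = mat (complex_of_real \<mu>) - H"
  have Bx: "B *v x = complex_of_real \<mu> *s x - H *v x"
    by (simp add: B_def matrix_vector_mult_diff_rdistrib mat_matrix_vector_mult)
  have qB: "qform B y = \<mu> * (norm y)^2 - qform H y" for y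
    unfolding B_def qform_diff by (simp add: qform_def mat_matrix_vector_mult cinner_scale_right cinner_self)
  have "B *v x = 0"
  proof (rule qform_zero_imp_kernel[OF _ S xS])
    show "hermitian B" unfolding B_def by (intro hermitian_diff hermitian_mat_of_real H)
    have "complex_of_real \<mu> *s x \<in> S" using S xS unfolding complex_subspace_def by blast
    thus "B *v x \<in> S" unfolding Bx using xS inv subspace_diff[OF subS] by blast
  qed (use bound qB nx \<mu>_def in auto)
  hence "H *v x = complex_of_real \<mu> *s x" by (simp add: Bx)
  moreover have "x \<noteq> 0" using nx by auto
  ultimately show ?thesis using that xS bound by blast
qed

lemma hermitian_eigenvectors_complete:
  assumes H: "hermitian H" and y: "\<forall>e l. H *v e = l *s e \<longrightarrow> cinner e y = 0"
  shows "y = 0"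
proof -
  define S where "S = {y. \<forall>e l. H *v e = l *s e \<longrightarrow> cinner e y = 0}"
  have S: "complex_subspace S" unfolding complex_subspace_def S_def
    by (auto simp: cinner_add_right cinner_scale_right)
  have "cinner e (H *v x) = 0" if "x \<in> S" "H *v e = l *s e" for x e l
    using that H unfolding S_def by (simp add: hermitian_cinner cinner_scale_left)
  hence "H *v x \<in> S" if "x \<in> S" for x using that unfolding S_def by blast
  moreover have "x = 0" if "x \<in> S" "H *v x = l *s x" for x l
  proof -
    have "cinner x x = 0" using that unfolding S_def by blast
    thus ?thesis by (simp add: cinner_self_eq_0_iff)
  qed
  ultimately have "\<not> (\<exists>x\<in>S. x \<noteq> 0)"
    using hermitian_max_eigenvector[OF H S] by metis
  thus ?thesis using y unfolding S_def by blast
qed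

lemma poly_mat_eq_0:
  assumes H: "hermitian H" and p: "\<forall>l\<in>mspec H. poly p l = 0"
  shows "poly_mat p H = 0"
proof -
  have "cinner e (poly_mat p H *v y) = 0" if e: "H *v e = l *s e" for e l y
  proof (cases "e = 0")
    case False
    hence "l \<in> mspec H" unfolding mspec_def using e by blast
    moreover have "cnj l = l" by (rule hermitian_eigenvalue_cnj[OF H e False])
    moreover have "cinner e (poly_mat p H *v y) = cinner (poly_mat (map_poly cnj p) H *v e) y"
      using H by (simp add: cinner_matrix_vector cadj_poly_mat hermitian_def)
    ultimately show ?thesis using p by (simp add: poly_mat_eigenvector[OF e] cinner_scale_left)
  qed simp
  hence "poly_mat p H *v y = 0" for y by (blast intro: hermitian_eigenvectors_complete[OF H])
  thus ?thesis by (simp add: matrix_eq)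
qed

lemma mspec_poly_mat_subset:
  assumes H: "hermitian H"
  shows "mspec (poly_mat p H) \<subseteq> poly p ` mspec H"
proof
  fix \<nu> assume "\<nu> \<in> mspec (poly_mat p H)"
  then obtain v where v: "v \<noteq> 0" "poly_mat p H *v v = \<nu> *s v" unfolding mspec_def by blast
  define r where "r = (\<Prod>\<mu>\<in>mspec H. [:- poly p \<mu>, 1:])"
  have "poly_mat (pcompose r p) H = 0"
    using finite_mspec[OF H]
    by (intro poly_mat_eq_0[OF H]) (auto simp: poly_pcompose r_def poly_prod prod_zero_iff)
  hence "poly r \<nu> *s v = 0"
    using poly_mat_eigenvector[OF v(2), of r] by (simp add: poly_mat_pcompose)
  hence "poly r \<nu> = 0" using v(1) by (auto simp: vec_eq_iff vector_scalar_mult_def)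
  thus "\<nu> \<in> poly p ` mspec H"
    using finite_mspec[OF H] by (auto simp: r_def poly_prod prod_zero_iff)
qed

section \<open>Functional calculus\<close>

text \<open>For Hermitian \<open>H\<close>, \<^const>\<open>matfun\<close> is well defined: two interpolants of \<open>f\<close> on the
  spectrum differ by a polynomial vanishing on the spectrum, which gives the zero matrix. In particular
  \<open>f\<close> only matters on the (finite) spectrum, so no continuity of \<open>f\<close> is ever needed.\<close>

lemma matfun_eq_poly_mat:
  assumes H: "hermitian H" and p: "\<forall>l\<in>mspec H. poly p l = complex_of_real (f (Re l))"
  shows "matfun f H = poly_mat p H"
proof -
  have "\<exists>B p. (\<forall>l\<in>mspec H. poly p l = complex_of_real (f (Re l))) \<and> B = poly_mat p H"
    using p by blast
  from someI_ex[OF this] obtain q where q: "\<forall>l\<in>mspec H. poly q l = complex_of_real (f (Re l))"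
    and fq: "matfun f H = poly_mat q H" unfolding matfun_def by blast
  have "poly_mat (q - p) H = 0" using p q by (intro poly_mat_eq_0[OF H]) simp
  thus ?thesis using fq by (simp add: poly_mat_diff)
qed

lemma matfun_as_poly_mat:
  assumes H: "hermitian H" and L: "finite L" "mspec H \<subseteq> L"
  obtains p where "\<forall>l\<in>L. poly p l = complex_of_real (f (Re l))" "matfun f H = poly_mat p H"
proof -
  obtain p where p: "\<forall>l\<in>L. poly p l = complex_of_real (f (Re l))"
    using lagrange_interpolation[OF L(1), of "\<lambda>l. complex_of_real (f (Re l))"] by blast
  moreover have "matfun f H = poly_mat p H" using p L(2) by (intro matfun_eq_poly_mat[OF H]) auto
  ultimately show ?thesis using that by blast
qed

lemmas matfun_as_poly_mat_mspec = matfun_as_poly_mat[OF _ finite_mspec order_refl]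

lemma matfun_cong:
  assumes H: "hermitian H" and fg: "\<forall>l\<in>mspec H. f (Re l) = g (Re l)"
  shows "matfun f H = matfun g H"
proof -
  obtain p where p: "\<forall>l\<in>mspec H. poly p l = complex_of_real (f (Re l))" "matfun f H = poly_mat p H"
    using matfun_as_poly_mat_mspec[OF H H] .
  have "matfun g H = poly_mat p H" using p(1) fg by (intro matfun_eq_poly_mat[OF H]) auto
  thus ?thesis using p(2) by simp
qed

lemma matfun_diff:
  assumes H: "hermitian H"
  shows "matfun f H - matfun g H = matfun (\<lambda>t. f t - g t) H"
proof -
  obtain p where p: "\<forall>l\<in>mspec H. poly p l = complex_of_real (f (Re l))" "matfun f H = poly_mat p H"
    using matfun_as_poly_mat_mspec[OF H H] .
  obtain q where q: "\<forall>l\<in>mspec H. poly q l = complex_of_real (g (Re l))" "matfun g H = poly_mat q H"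
    using matfun_as_poly_mat_mspec[OF H H] .
  have "matfun (\<lambda>t. f t - g t) H = poly_mat (p - q) H"
    using p(1) q(1) by (intro matfun_eq_poly_mat[OF H]) auto
  thus ?thesis using p(2) q(2) by (simp add: poly_mat_diff)
qed

lemma matfun_mult:
  assumes H: "hermitian H"
  shows "matfun f H ** matfun g H = matfun (\<lambda>t. f t * g t) H"
proof -
  obtain p where p: "\<forall>l\<in>mspec H. poly p l = complex_of_real (f (Re l))" "matfun f H = poly_mat p H"
    using matfun_as_poly_mat_mspec[OF H H] .
  obtain q where q: "\<forall>l\<in>mspec H. poly q l = complex_of_real (g (Re l))" "matfun g H = poly_mat q H"
    using matfun_as_poly_mat_mspec[OF H H] .
  have "matfun (\<lambda>t. f t * g t) H = poly_mat (p * q) H"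
    using p(1) q(1) by (intro matfun_eq_poly_mat[OF H]) auto
  thus ?thesis using p(2) q(2) by (simp add: poly_mat_mult)
qed

lemma matfun_const: "hermitian H \<Longrightarrow> matfun (\<lambda>t. c) H = mat (complex_of_real c)"
  using matfun_eq_poly_mat[of H "[:complex_of_real c:]"] by (simp add: poly_mat_const)

lemma matfun_id: "hermitian H \<Longrightarrow> matfun (\<lambda>t. t) H = H"
  using matfun_eq_poly_mat[of H "[:0, 1:]"] mspec_hermitian_real[of H] by (simp add: poly_mat_x)

lemma matfun_mult_left: "hermitian H \<Longrightarrow> H ** matfun f H = matfun (\<lambda>t. t * f t) H"
  using matfun_mult[of H "\<lambda>t. t" f] by (simp add: matfun_id)

lemma matfun_mult_right: "hermitian H \<Longrightarrow> matfun f H ** H = matfun (\<lambda>t. f t * t) H"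
  using matfun_mult[of H f "\<lambda>t. t"] by (simp add: matfun_id)

lemma hermitian_matfun:
  assumes H: "hermitian H"
  shows "hermitian (matfun f H)"
proof -
  obtain p where p: "\<forall>l\<in>mspec H. poly p l = complex_of_real (f (Re l))" "matfun f H = poly_mat p H"
    using matfun_as_poly_mat_mspec[OF H H] .
  have "cnj l = l" if "l \<in> mspec H" for l
    using mspec_hermitian_real[OF H that] by (metis complex_cnj_complex_of_real)
  hence "matfun f H = poly_mat (map_poly cnj p) H"
    using p(1) by (intro matfun_eq_poly_mat[OF H]) simp
  moreover have "cadj (poly_mat p H) = poly_mat (map_poly cnj p) H"
    using H by (simp add: cadj_poly_mat hermitian_def)
  ultimately show ?thesis using p(2) by (simp add: hermitian_def)
qed

lemma qform_matfun_nonneg: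
  assumes H: "hermitian H" and f: "\<forall>l\<in>mspec H. 0 \<le> f (Re l)"
  shows "0 \<le> qform (matfun f H) x"
proof -
  define Q where "Q = matfun (\<lambda>t. sqrt (f t)) H"
  have "Q ** Q = matfun (\<lambda>t. sqrt (f t) * sqrt (f t)) H" unfolding Q_def by (rule matfun_mult[OF H])
  also have "\<dots> = matfun f H" using f by (intro matfun_cong[OF H]) auto
  moreover have "hermitian Q" unfolding Q_def by (rule hermitian_matfun[OF H])
  ultimately have "qform (matfun f H) x = (norm (Q *v x))^2"
    using qform_hermitian_square by metis
  thus ?thesis by simp
qed

lemma matfun_intertwine:
  assumes "hermitian (C ** B)" "hermitian (B ** C)"
  shows "B ** matfun f (C ** B) = matfun f (B ** C) ** B"
proof -
  have fin: "finite (mspec (C ** B) \<union> mspec (B ** C))"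
    using finite_mspec[OF assms(1)] finite_mspec[OF assms(2)] by simp
  obtain p where "\<forall>l\<in>mspec (C ** B) \<union> mspec (B ** C). poly p l = complex_of_real (f (Re l))"
    using lagrange_interpolation[OF fin, of "\<lambda>l. complex_of_real (f (Re l))"] by blast
  hence "matfun f (C ** B) = poly_mat p (C ** B)" "matfun f (B ** C) = poly_mat p (B ** C)"
    by (auto intro: matfun_eq_poly_mat[OF assms(1)] matfun_eq_poly_mat[OF assms(2)])
  thus ?thesis by (simp add: poly_mat_intertwine)
qed

lemma matfun_matfun:
  assumes H: "hermitian H"
  shows "matfun h (matfun k H) = matfun (\<lambda>t. h (k t)) H"
proof -
  obtain p where p: "\<forall>l\<in>mspec H. poly p l = complex_of_real (k (Re l))" "matfun k H = poly_mat p H"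
    using matfun_as_poly_mat_mspec[OF H H] .
  have hP: "hermitian (poly_mat p H)" using hermitian_matfun[OF H, of k] p(2) by simp
  obtain q where q: "\<forall>l\<in>poly p ` mspec H. poly q l = complex_of_real (h (Re l))"
    using lagrange_interpolation[of "poly p ` mspec H" "\<lambda>l. complex_of_real (h (Re l))"]
      finite_mspec[OF H] by blast
  have "matfun h (poly_mat p H) = poly_mat q (poly_mat p H)"
    using q mspec_poly_mat_subset[OF H, of p] by (intro matfun_eq_poly_mat[OF hP]) auto
  also have "\<dots> = poly_mat (pcompose q p) H" by (simp add: poly_mat_pcompose)
  also have "\<dots> = matfun (\<lambda>t. h (k t)) H"
    using p(1) q by (intro matfun_eq_poly_mat[OF H, symmetric]) (simp add: poly_pcompose)
  finally show ?thesis using p(2) by simp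
qed

lemma mspec_nonneg: "\<forall>x. 0 \<le> qform H x \<Longrightarrow> l \<in> mspec H \<Longrightarrow> 0 \<le> Re l"
  using mspec_lower_bound[of 0 H l] by simp

lemma mspec_cadj_mult_nonneg: "l \<in> mspec (cadj T ** T) \<Longrightarrow> 0 \<le> Re l"
  by (rule mspec_nonneg[of "cadj T ** T"]) (simp_all add: qform_cadj_mult)

lemma mspec_mult_cadj_nonneg: "l \<in> mspec (T ** cadj T) \<Longrightarrow> 0 \<le> Re l"
  using mspec_cadj_mult_nonneg[of l "cadj T"] by simp

section \<open>Positive block matrices\<close>

text \<open>\<open>block_psd A B X\<close> says that the block matrix \<open>[[A, X\<^sup>*], [X, B]]\<close> is positive
  semidefinite, expressed through its quadratic form at the vector \<open>(u, v)\<close>.\<close>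

definition block_psd :: "complex^'n^'n \<Rightarrow> complex^'n^'n \<Rightarrow> complex^'n^'n \<Rightarrow> bool" where
  "block_psd A B X \<longleftrightarrow> (\<forall>u v. 0 \<le> qform A u + 2 * Re (cinner v (X *v u)) + qform B v)"

lemma block_psd_uminus: "block_psd A B X \<Longrightarrow> block_psd A B (- X)"
  unfolding block_psd_def
proof (intro allI)
  fix u v assume "\<forall>u v. 0 \<le> qform A u + 2 * Re (cinner v (X *v u)) + qform B v"
  hence "0 \<le> qform A u + 2 * Re (cinner (- v) (X *v u)) + qform B (- v)" by blast
  thus "0 \<le> qform A u + 2 * Re (cinner v ((- X) *v u)) + qform B v"
    by (simp add: qform_uminus_vector matrix_vector_mult_uminus_left cinner_minus_left
        cinner_minus_right)
qed

lemma block_psd_mono: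
  assumes "block_psd A B X" "\<forall>u. qform A u \<le> qform A' u" "\<forall>v. qform B v \<le> qform B' v"
  shows "block_psd A' B' X"
  using assms unfolding block_psd_def by (meson add_mono order_trans order_refl)

lemma block_psd_congruence:
  assumes "hermitian C" "block_psd A B X"
  shows "block_psd (C ** A ** C) (C ** B ** C) (C ** X ** C)"
  using assms unfolding block_psd_def qform_congruence[OF assms(1)] cinner_congruence[OF assms(1)]
  by blast

lemma loewner_le_if_block_psd_diag:
  assumes hX: "hermitian X" and hP: "hermitian P" and b: "block_psd P P X"
  shows "loewner_le X P"
  unfolding loewner_le_def psd_iff_qform[OF hermitian_diff[OF hP hX]]
proof
  fix w
  have "0 \<le> qform P w + 2 * Re (cinner (- w) (X *v w)) + qform P (- w)"
    using b unfolding block_psd_def by blast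
  moreover have "Re (cinner (- w) (X *v w)) = - qform X w"
    by (simp add: qform_def cinner_minus_left)
  ultimately show "0 \<le> qform (P - X) w" by (simp add: qform_diff qform_uminus_vector)
qed

lemma qform_matfun_mono:
  assumes H: "hermitian H" and fg: "\<forall>l\<in>mspec H. f (Re l) \<le> g (Re l)"
  shows "qform (matfun f H) x \<le> qform (matfun g H) x"
proof -
  have "0 \<le> qform (matfun (\<lambda>t. g t - f t) H) x" using fg by (intro qform_matfun_nonneg[OF H]) auto
  thus ?thesis by (simp flip: matfun_diff[OF H] add: qform_diff)
qed

lemma cadj_mult_eq_0: "(A ** cadj A) ** W = 0 \<Longrightarrow> cadj A ** W = 0"
proof -
  assume AW: "(A ** cadj A) ** W = 0"
  have "(norm (cadj A *v (W *v y)))^2 = 0" for y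
    using qform_cadj_mult[of "cadj A" "W *v y"] AW
    by (simp add: qform_def matrix_vector_mul_assoc)
  thus ?thesis by (simp add: matrix_eq matrix_vector_mul_assoc)
qed

lemma cadj_mult_matfun:
  assumes h: "\<forall>l\<in>mspec (A ** cadj A). Re l \<noteq> 0 \<longrightarrow> h (Re l) = 1"
  shows "cadj A ** matfun h (A ** cadj A) = cadj A"
proof -
  let ?M = "A ** cadj A"
  have H: "hermitian ?M" by (rule hermitian_mult_cadj)
  define W where "W = matfun (\<lambda>s. h s - 1) ?M"
  have "?M ** W = matfun (\<lambda>s. s * (h s - 1)) ?M" unfolding W_def by (rule matfun_mult_left[OF H])
  also have "\<dots> = matfun (\<lambda>s. 0) ?M" using h by (intro matfun_cong[OF H]) auto
  finally have "cadj A ** W = 0" by (intro cadj_mult_eq_0) (simp add: matfun_const[OF H])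
  moreover have "matfun h ?M = W + mat 1"
    unfolding W_def by (simp flip: matfun_diff[OF H] add: matfun_const[OF H])
  ultimately show ?thesis by (simp add: matrix_add_ldistrib)
qed

lemma norm_cadj_mult_matfun:
  "(norm ((cadj T ** matfun \<psi> (T ** cadj T)) *v v))^2
    = qform (matfun (\<lambda>s. \<psi> s * s * \<psi> s) (T ** cadj T)) v"
proof -
  have H: "hermitian (T ** cadj T)" by (rule hermitian_mult_cadj)
  have "cadj (cadj T ** matfun \<psi> (T ** cadj T)) ** (cadj T ** matfun \<psi> (T ** cadj T))
      = matfun \<psi> (T ** cadj T) ** (T ** cadj T) ** matfun \<psi> (T ** cadj T)"
    using hermitian_matfun[OF H, of \<psi>] by (simp add: cadj_mult hermitian_def matrix_mul_assoc)
  also have "\<dots> = matfun (\<lambda>s. \<psi> s * s * \<psi> s) (T ** cadj T)"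
    by (simp add: matfun_mult_right[OF H] matfun_mult[OF H])
  finally show ?thesis by (simp flip: qform_cadj_mult)
qed

text \<open>The factorisation \<open>T = Y\<^sup>* \<Phi>\<close> with \<open>\<Phi> = F(T\<^sup>*T)\<^sup>1\<^sup>/\<^sup>2\<close> and
  \<open>Y = T\<^sup>* \<psi>(TT\<^sup>*)\<close>, where \<open>\<psi> = F\<^sup>-\<^sup>1\<^sup>/\<^sup>2\<close> on \<open>(0,\<infinity>)\<close>; then
  \<open>Y\<^sup>*Y = (s/F)(TT\<^sup>*) = G(TT\<^sup>*)\<close> off the kernel.\<close>

lemma product_weight:
  assumes FG: "\<forall>s\<ge>0. 0 \<le> F s \<and> 0 \<le> G s \<and> F s * G s = s" and s: "0 \<le> s"
    and \<psi>: "\<psi> = (\<lambda>s. if s > 0 then 1 / sqrt (F s) else 0)"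
  shows "s \<noteq> 0 \<Longrightarrow> sqrt (F s) * \<psi> s = 1" and "\<psi> s * s * \<psi> s \<le> G s"
proof -
  have Fpos: "F s > 0" if "s > 0" using FG that by (metis less_eq_real_def mult_zero_left)
  show "sqrt (F s) * \<psi> s = 1" if "s \<noteq> 0" using s that Fpos by (simp add: \<psi>)
  show "\<psi> s * s * \<psi> s \<le> G s"
  proof (cases "s > 0")
    case True
    have "\<psi> s * s * \<psi> s = s / (sqrt (F s))^2" using True by (simp add: \<psi> power2_eq_square)
    also have "\<dots> = G s" using FG s Fpos[OF True] by (simp add: field_simps)
    finally show ?thesis by simp
  qed (use FG s in \<open>simp add: \<psi>\<close>)
qed

lemma factorization_by_product:
  fixes T :: "complex^'n^'n"
  assumes FG: "\<forall>s\<ge>0. 0 \<le> F s \<and> 0 \<le> G s \<and> F s * G s = s"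
  obtains \<Phi> Y where "hermitian \<Phi>" "\<Phi> ** \<Phi> = matfun F (cadj T ** T)" "T = cadj Y ** \<Phi>"
    "\<forall>v. (norm (Y *v v))^2 \<le> qform (matfun G (T ** cadj T)) v"
proof -
  define M1 where "M1 = cadj T ** T"
  define M2 where "M2 = T ** cadj T"
  have H1: "hermitian M1" and H2: "hermitian M2"
    unfolding M1_def M2_def by (rule hermitian_cadj_mult, rule hermitian_mult_cadj)
  define \<psi> where "\<psi> = (\<lambda>s. if s > 0 then 1 / sqrt (F s) else 0)"
  note weight = product_weight[OF FG _ \<psi>_def]
  have spec1: "0 \<le> Re l" if "l \<in> mspec M1" for l
    using that mspec_cadj_mult_nonneg unfolding M1_def by blast
  have spec2: "0 \<le> Re l" if "l \<in> mspec M2" for l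
    using that mspec_mult_cadj_nonneg unfolding M2_def by blast
  define \<Phi> where "\<Phi> = matfun (\<lambda>s. sqrt (F s)) M1"
  define Y where "Y = cadj T ** matfun \<psi> M2"
  have H\<Phi>: "hermitian \<Phi>" unfolding \<Phi>_def by (rule hermitian_matfun[OF H1])
  have "\<Phi> ** \<Phi> = matfun (\<lambda>s. sqrt (F s) * sqrt (F s)) M1" unfolding \<Phi>_def by (rule matfun_mult[OF H1])
  also have "\<dots> = matfun F M1" using spec1 FG by (intro matfun_cong[OF H1]) simp
  finally have \<Phi>\<Phi>: "\<Phi> ** \<Phi> = matfun F M1" .
  have "\<Phi> ** Y = cadj T ** (matfun (\<lambda>s. sqrt (F s)) M2 ** matfun \<psi> M2)"
    using matfun_intertwine[of T "cadj T" "\<lambda>s. sqrt (F s)", OF hermitian_mult_cadj hermitian_cadj_mult]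
    by (simp add: \<Phi>_def Y_def M1_def M2_def matrix_mul_assoc)
  also have "\<dots> = cadj T"
    unfolding matfun_mult[OF H2] using spec2 weight(1) unfolding M2_def
    by (intro cadj_mult_matfun) blast
  finally have "cadj (\<Phi> ** Y) = T" by simp
  hence "T = cadj Y ** \<Phi>" using H\<Phi> by (simp add: cadj_mult hermitian_def)
  moreover have "(norm (Y *v v))^2 \<le> qform (matfun G M2) v" for v
    unfolding Y_def norm_cadj_mult_matfun M2_def using spec2 weight(2) unfolding M2_def
    by (intro qform_matfun_mono[OF hermitian_mult_cadj]) blast
  ultimately show ?thesis using that H\<Phi> \<Phi>\<Phi> unfolding M1_def M2_def by blast
qed

lemma block_psd_matfun_abs:
  fixes T :: "complex^'n^'n"
  assumes "\<forall>s\<ge>0. 0 \<le> F s \<and> 0 \<le> G s \<and> F s * G s = s"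
  shows "block_psd (matfun F (cadj T ** T)) (matfun G (T ** cadj T)) T"
  unfolding block_psd_def
proof (intro allI)
  fix u v
  obtain \<Phi> Y where H\<Phi>: "hermitian \<Phi>" and \<Phi>\<Phi>: "\<Phi> ** \<Phi> = matfun F (cadj T ** T)"
    and T: "T = cadj Y ** \<Phi>" and Y: "\<forall>v. (norm (Y *v v))^2 \<le> qform (matfun G (T ** cadj T)) v"
    using factorization_by_product[OF assms, where T=T] by blast
  have "cinner v (T *v u) = cinner (Y *v v) (\<Phi> *v u)"
    by (subst T) (simp add: matrix_vector_mul_assoc[symmetric] cinner_matrix_vector)
  moreover have "qform (matfun F (cadj T ** T)) u = (norm (\<Phi> *v u))^2"
    by (simp flip: \<Phi>\<Phi> add: qform_hermitian_square[OF H\<Phi>])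
  ultimately have "0 \<le> qform (matfun F (cadj T ** T)) u + 2 * Re (cinner v (T *v u)) + (norm (Y *v v))^2"
    using norm_add_square[of "\<Phi> *v u" "Y *v v"] zero_le_power2[of "norm (\<Phi> *v u + Y *v v)"]
    by simp
  thus "0 \<le> qform (matfun F (cadj T ** T)) u + 2 * Re (cinner v (T *v u))
      + qform (matfun G (T ** cadj T)) v"
    using Y by (meson add_left_mono order_trans)
qed


section \<open>The geometric mean as a maximal off-diagonal block\<close>

lemma qform_square_of_eigen_diff:
  assumes hY: "hermitian Y" and hR: "hermitian R"
    and x: "(Y - R) *v x = complex_of_real \<mu> *s x"
  shows "qform (Y ** Y) x = qform (R ** R) x + \<mu> * (\<mu> * (norm x)^2 + 2 * qform R x)"
proof -
  have Yx: "Y *v x = R *v x + complex_of_real \<mu> *s x"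
    using x by (simp add: matrix_vector_mult_diff_rdistrib algebra_simps)
  have "cinner x ((Y ** Y) *v x) = cinner (Y *v x) (Y *v x)"
    by (simp add: matrix_vector_mul_assoc[symmetric] hermitian_cinner[OF hY])
  also have "\<dots> = cinner (R *v x) (R *v x) + complex_of_real \<mu> * cinner x (R *v x)
      + complex_of_real \<mu> * cinner (R *v x) x + complex_of_real \<mu> * complex_of_real \<mu> * cinner x x"
    by (simp add: Yx cinner_add_left cinner_add_right cinner_scale_left cinner_scale_right
        algebra_simps)
  also have "cinner (R *v x) (R *v x) = cinner x ((R ** R) *v x)"
    by (simp add: matrix_vector_mul_assoc[symmetric] hermitian_cinner[OF hR])
  also have "cinner (R *v x) x = cinner x (R *v x)"
    by (simp add: hermitian_cinner[OF hR])
  finally show ?thesis by (simp add: qform_def cinner_self algebra_simps power2_eq_square)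
qed

text \<open>If the top eigenvalue \<open>\<mu>\<close> of \<open>Y - R\<close> were positive, its eigenvector would violate
  \<open>Y\<^sup>2 \<le> R\<^sup>2\<close>.\<close>

lemma qform_le_if_square_le:
  assumes hY: "hermitian Y" and hR: "hermitian R" and Rpos: "\<forall>x. 0 \<le> qform R x"
    and sq: "\<forall>x. qform (Y ** Y) x \<le> qform (R ** R) x"
  shows "qform Y w \<le> qform R w"
proof -
  have S: "complex_subspace (UNIV :: (complex^'n) set)" by (simp add: complex_subspace_def)
  have ne: "\<exists>x\<in>UNIV. (x :: complex^'n) \<noteq> 0"
    by (rule bexI[of _ "axis undefined 1"]) simp_all
  obtain x \<mu> where "x \<in> UNIV" and x: "x \<noteq> 0" "(Y - R) *v x = complex_of_real \<mu> *s x"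
    and top: "\<forall>y\<in>UNIV. qform (Y - R) y \<le> \<mu> * (norm y)^2"
    by (rule hermitian_max_eigenvector[OF hermitian_diff[OF hY hR] S _ ne]) simp_all
  have "\<mu> \<le> 0"
  proof (rule ccontr)
    assume "\<not> \<mu> \<le> 0"
    hence "\<mu> * (\<mu> * (norm x)^2 + 2 * qform R x) > 0"
      using x(1) Rpos by (intro mult_pos_pos add_pos_nonneg) simp_all
    thus False using qform_square_of_eigen_diff[OF hY hR x(2)] sq[rule_format, of x] by linarith
  qed
  hence "\<mu> * (norm w)^2 \<le> 0" by (simp add: mult_nonpos_nonneg)
  moreover have "qform Y w - qform R w \<le> \<mu> * (norm w)^2" using top by (simp add: qform_diff)
  ultimately show ?thesis by linarith
qed

lemma block_psd_id_square: "hermitian R \<Longrightarrow> block_psd (mat 1) (R ** R) R"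
  unfolding block_psd_def
  by (simp add: qform_mat_1 qform_hermitian_square norm_add_square[symmetric] hermitian_cinner)

lemma block_psd_id_imp_square_le:
  assumes hY: "hermitian Y" and b: "block_psd (mat 1) M Y"
  shows "qform (Y ** Y) x \<le> qform M x"
proof -
  have "0 \<le> qform (mat 1) (- (Y *v x)) + 2 * Re (cinner x (Y *v (- (Y *v x)))) + qform M x"
    using b unfolding block_psd_def by blast
  moreover have "cinner x (Y *v (- (Y *v x))) = - cinner (Y *v x) (Y *v x)"
    by (simp add: matrix_vector_mult_uminus_right cinner_minus_right hermitian_cinner[OF hY])
  ultimately show ?thesis
    by (simp add: qform_mat_1 qform_hermitian_square[OF hY] cinner_self)
qed

lemma matfun_sqrt_square:
  assumes H: "hermitian H" and pos: "\<forall>l\<in>mspec H. 0 \<le> Re l"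
  shows "matfun sqrt H ** matfun sqrt H = H"
proof -
  have "matfun sqrt H ** matfun sqrt H = matfun (\<lambda>t. sqrt t * sqrt t) H" by (rule matfun_mult[OF H])
  also have "\<dots> = matfun (\<lambda>t. t) H" using pos by (intro matfun_cong[OF H]) auto
  finally show ?thesis by (simp add: matfun_id[OF H])
qed

lemma matfun_sqrt_inverse:
  assumes H: "hermitian H" and pos: "\<forall>l\<in>mspec H. 0 < Re l"
  shows "matfun sqrt H ** matfun (\<lambda>t. inverse (sqrt t)) H = mat 1"
    and "matfun (\<lambda>t. inverse (sqrt t)) H ** matfun sqrt H = mat 1"
proof -
  have "matfun (\<lambda>t. sqrt t * inverse (sqrt t)) H = matfun (\<lambda>t. 1) H"
    using pos by (intro matfun_cong[OF H]) auto
  moreover have "matfun (\<lambda>t. inverse (sqrt t) * sqrt t) H = matfun (\<lambda>t. 1) H"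
    using pos by (intro matfun_cong[OF H]) auto
  ultimately show "matfun sqrt H ** matfun (\<lambda>t. inverse (sqrt t)) H = mat 1"
    "matfun (\<lambda>t. inverse (sqrt t)) H ** matfun sqrt H = mat 1"
    by (simp_all add: matfun_mult[OF H] matfun_const[OF H])
qed

lemma gmean_pd_factors:
  fixes A B :: "complex^'n^'n"
  assumes hA: "hermitian A" and hB: "hermitian B" and Apos: "\<forall>l\<in>mspec A. 0 < Re l"
    and Bpos: "\<forall>x. 0 \<le> qform B x"
  defines "S \<equiv> matfun sqrt A" and "C \<equiv> matfun (\<lambda>t. inverse (sqrt t)) A"
    and "R \<equiv> matfun sqrt (matfun (\<lambda>t. inverse (sqrt t)) A ** B ** matfun (\<lambda>t. inverse (sqrt t)) A)"
  shows "hermitian S" "hermitian C" "hermitian R" "\<forall>x. 0 \<le> qform R x"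
    "S ** C = mat 1" "C ** S = mat 1" "S ** S = A" "R ** R = C ** B ** C"
    "gmean_pd A B = S ** R ** S"
proof -
  show hS: "hermitian S" and hC: "hermitian C" unfolding S_def C_def by (simp_all add: hermitian_matfun[OF hA])
  have hM: "hermitian (C ** B ** C)" by (rule hermitian_congruence[OF hC hB])
  have Mpos: "\<forall>x. 0 \<le> qform (C ** B ** C) x" by (simp add: qform_congruence[OF hC] Bpos)
  have R: "R = matfun sqrt (C ** B ** C)" unfolding R_def C_def ..
  show "hermitian R" unfolding R by (rule hermitian_matfun[OF hM])
  show "\<forall>x. 0 \<le> qform R x"
    unfolding R using mspec_nonneg[OF Mpos] by (auto intro: qform_matfun_nonneg[OF hM])
  show "S ** C = mat 1" "C ** S = mat 1" unfolding S_def C_def by (simp_all add: matfun_sqrt_inverse[OF hA Apos])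
  show "S ** S = A"
    unfolding S_def using Apos by (intro matfun_sqrt_square[OF hA]) (simp add: less_imp_le)
  show "R ** R = C ** B ** C"
    unfolding R using mspec_nonneg[OF Mpos] by (intro matfun_sqrt_square[OF hM]) blast
  show "gmean_pd A B = S ** R ** S" by (simp add: gmean_pd_def S_def C_def R_def)
qed

lemma
  fixes A B :: "complex^'n^'n"
  assumes hA: "hermitian A" and hB: "hermitian B" and Apos: "\<forall>l\<in>mspec A. 0 < Re l"
    and Bpos: "\<forall>x. 0 \<le> qform B x"
  shows hermitian_gmean_pd: "hermitian (gmean_pd A B)"
    and block_psd_gmean_pd: "block_psd A B (gmean_pd A B)"
    and gmean_pd_maximal: "\<lbrakk>hermitian X; block_psd A B X\<rbrakk> \<Longrightarrow> qform X w \<le> qform (gmean_pd A B) w"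
proof -
  define S where "S = matfun sqrt A"
  define C where "C = matfun (\<lambda>t. inverse (sqrt t)) A"
  define R where "R = matfun sqrt (C ** B ** C)"
  note P = gmean_pd_factors[OF hA hB Apos Bpos, folded S_def C_def, folded R_def]
  note hS = P(1) and hC = P(2) and hR = P(3) and SC = P(5) and CS = P(6) and SS = P(7)
    and RR = P(8) and G = P(9)
  show "hermitian (gmean_pd A B)" unfolding G by (rule hermitian_congruence[OF hS hR])
  have "S ** (R ** R) ** S = (S ** C) ** B ** (C ** S)" by (simp only: RR matrix_mul_assoc)
  hence SRRS: "S ** (R ** R) ** S = B" by (simp add: SC CS)
  show "block_psd A B (gmean_pd A B)"
    using block_psd_congruence[OF hS block_psd_id_square[OF hR]] by (simp add: G SRRS SS)
  assume hX: "hermitian X" and bX: "block_psd A B X"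
  define Y where "Y = C ** X ** C"
  have hY: "hermitian Y" unfolding Y_def by (rule hermitian_congruence[OF hC hX])
  have "C ** A ** C = (C ** S) ** (S ** C)" by (simp only: SS[symmetric] matrix_mul_assoc)
  hence "block_psd (mat 1) (R ** R) Y"
    using block_psd_congruence[OF hC bX] by (simp add: SC CS RR Y_def)
  hence "qform Y (S *v w) \<le> qform R (S *v w)"
    by (intro qform_le_if_square_le[OF hY hR P(4)] allI block_psd_id_imp_square_le[OF hY])
  moreover have "S ** Y ** S = (S ** C) ** X ** (C ** S)" by (simp only: Y_def matrix_mul_assoc)
  hence "X = S ** Y ** S" by (simp add: SC CS)
  ultimately show "qform X w \<le> qform (gmean_pd A B) w"
    unfolding G by (simp add: qform_congruence[OF hS])
qed

lemma qform_shift: "qform (A + e *\<^sub>R mat 1) u = qform A u + e * (norm u)^2"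
  by (simp add: qform_add qform_scaleR qform_mat_1)

lemma
  assumes hA: "hermitian A" and Apos: "\<forall>x. 0 \<le> qform A x" and e: "0 < e"
  shows hermitian_shift: "hermitian (A + e *\<^sub>R mat 1)"
    and mspec_shift_pos: "\<forall>l\<in>mspec (A + e *\<^sub>R mat 1). 0 < Re l"
    and qform_shift_nonneg: "\<forall>x. 0 \<le> qform (A + e *\<^sub>R mat 1) x"
proof -
  show "hermitian (A + e *\<^sub>R mat 1)"
    using hermitian_mat_of_real[of 1] by (intro hermitian_add hermitian_scaleR hA) simp
  have "\<forall>x. e * (norm x)^2 \<le> qform (A + e *\<^sub>R mat 1) x" using Apos by (simp add: qform_shift)
  hence "e \<le> Re l" if "l \<in> mspec (A + e *\<^sub>R mat 1)" for l using that by (rule mspec_lower_bound)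
  thus "\<forall>l\<in>mspec (A + e *\<^sub>R mat 1). 0 < Re l" using e by fastforce
  show "\<forall>x. 0 \<le> qform (A + e *\<^sub>R mat 1) x" using Apos e by (simp add: qform_shift)
qed

text \<open>The regularised means \<open>(A + \<epsilon>I) \<sharp> (B + \<epsilon>I)\<close> decrease as \<open>\<epsilon> \<down> 0\<close>
  and stay above every feasible \<open>X\<close>: a block feasible for \<open>\<epsilon>'\<close> stays feasible for \<open>\<epsilon> \<ge> \<epsilon>'\<close>.\<close>

lemma qform_gmean_pd_shift:
  fixes A B X :: "complex^'n^'n"
  assumes hA: "hermitian A" and hB: "hermitian B"
    and Apos: "\<forall>x. 0 \<le> qform A x" and Bpos: "\<forall>x. 0 \<le> qform B x"
    and hX: "hermitian X" and bX: "block_psd A B X" and e: "0 < e'" "e' \<le> e"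
  shows "qform X w \<le> qform (gmean_pd (A + e' *\<^sub>R mat 1) (B + e' *\<^sub>R mat 1)) w"
    and "qform (gmean_pd (A + e' *\<^sub>R mat 1) (B + e' *\<^sub>R mat 1)) w
         \<le> qform (gmean_pd (A + e *\<^sub>R mat 1) (B + e *\<^sub>R mat 1)) w"
proof -
  have e0: "0 < e" using e by linarith
  have shift_mono: "block_psd (A + d *\<^sub>R mat 1) (B + d *\<^sub>R mat 1) Z"
    if "block_psd (A + d' *\<^sub>R mat 1) (B + d' *\<^sub>R mat 1) Z" "d' \<le> d" for d d' Z
  proof (rule block_psd_mono[OF that(1)])
    have "d' * (norm x)^2 \<le> d * (norm x)^2" for x :: "complex^'n"
      using that(2) by (simp add: mult_right_mono)
    thus "\<forall>u. qform (A + d' *\<^sub>R mat 1) u \<le> qform (A + d *\<^sub>R mat 1) u"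
      "\<forall>v. qform (B + d' *\<^sub>R mat 1) v \<le> qform (B + d *\<^sub>R mat 1) v"
      by (simp_all add: qform_shift)
  qed
  note gm = hermitian_gmean_pd block_psd_gmean_pd gmean_pd_maximal
  note sh = hermitian_shift[OF hA Apos] hermitian_shift[OF hB Bpos] mspec_shift_pos[OF hA Apos]
    qform_shift_nonneg[OF hB Bpos]
  have "block_psd (A + 0 *\<^sub>R mat 1) (B + 0 *\<^sub>R mat 1) X" using bX by simp
  hence "block_psd (A + e' *\<^sub>R mat 1) (B + e' *\<^sub>R mat 1) X"
    by (rule shift_mono) (use e in simp)
  thus "qform X w \<le> qform (gmean_pd (A + e' *\<^sub>R mat 1) (B + e' *\<^sub>R mat 1)) w"
    using gm(3)[OF sh[OF e(1)] hX] by blast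
  have "block_psd (A + e *\<^sub>R mat 1) (B + e *\<^sub>R mat 1) (gmean_pd (A + e' *\<^sub>R mat 1) (B + e' *\<^sub>R mat 1))"
    using gm(2)[OF sh[OF e(1)]] e(2) by (rule shift_mono)
  thus "qform (gmean_pd (A + e' *\<^sub>R mat 1) (B + e' *\<^sub>R mat 1)) w
      \<le> qform (gmean_pd (A + e *\<^sub>R mat 1) (B + e *\<^sub>R mat 1)) w"
    using gm(3)[OF sh[OF e0] gm(1)[OF sh[OF e(1)]]] by blast
qed

lemma cinner_matrix_tendsto:
  assumes "(G \<longlongrightarrow> L) F"
  shows "((\<lambda>e. cinner w (G e *v w)) \<longlongrightarrow> cinner w (L *v w)) F"
  unfolding cinner_def matrix_vector_mult_def using assms
  by (auto intro!: tendsto_intros)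

lemma matrix_entry_cinner: "M $ i $ j = cinner (axis i 1) (M *v axis j 1)"
  by (simp add: cinner_def matrix_vector_mult_def axis_def if_distrib if_distribR sum.delta
      cong: if_cong)

lemma cinner_quadratic_expand:
  "cinner (a + c *s b) (M *v (a + c *s b)) =
   cinner a (M *v a) + c * cinner a (M *v b) + cnj c * cinner b (M *v a) + cnj c * c * cinner b (M *v b)"
  by (simp add: matrix_vector_right_distrib vector_scalar_commute cinner_add_left cinner_add_right
      cinner_scale_left cinner_scale_right algebra_simps)

lemma cinner_polarization:
  "cinner a (M *v b) = (cinner (a + 1 *s b) (M *v (a + 1 *s b))
     - cinner (a + (-1) *s b) (M *v (a + (-1) *s b))
     - \<i> * cinner (a + \<i> *s b) (M *v (a + \<i> *s b))
     + \<i> * cinner (a + (-\<i>) *s b) (M *v (a + (-\<i>) *s b))) / 4"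
  unfolding cinner_quadratic_expand by (simp add: algebra_simps)

lemma tendsto_matrix_if_tendsto_cinner:
  fixes G :: "'a \<Rightarrow> complex^'n^'n"
  assumes conv: "\<And>w. \<exists>c. ((\<lambda>e. cinner w (G e *v w)) \<longlongrightarrow> c) F"
  shows "\<exists>L. (G \<longlongrightarrow> L) F"
proof -
  have entries: "\<exists>c. ((\<lambda>e. G e $ i $ j) \<longlongrightarrow> c) F" for i j
  proof -
    define a :: "complex^'n" where "a = axis i 1"
    define b :: "complex^'n" where "b = axis j 1"
    obtain c1 c2 c3 c4 where
      "((\<lambda>e. cinner (a + 1 *s b) (G e *v (a + 1 *s b))) \<longlongrightarrow> c1) F"
      "((\<lambda>e. cinner (a + (-1) *s b) (G e *v (a + (-1) *s b))) \<longlongrightarrow> c2) F"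
      "((\<lambda>e. cinner (a + \<i> *s b) (G e *v (a + \<i> *s b))) \<longlongrightarrow> c3) F"
      "((\<lambda>e. cinner (a + (-\<i>) *s b) (G e *v (a + (-\<i>) *s b))) \<longlongrightarrow> c4) F"
      using conv by metis
    hence "((\<lambda>e. cinner a (G e *v b)) \<longlongrightarrow> (c1 - c2 - \<i> * c3 + \<i> * c4) / 4) F"
      unfolding cinner_polarization[of a "G _" b] by (intro tendsto_intros) simp_all
    thus ?thesis unfolding a_def b_def matrix_entry_cinner[symmetric] by blast
  qed
  define L where "L = (\<chi> i j. SOME c. ((\<lambda>e. G e $ i $ j) \<longlongrightarrow> c) F)"
  have "((\<lambda>e. G e $ i $ j) \<longlongrightarrow> L $ i $ j) F" for i j
    unfolding L_def by (simp add: someI_ex[OF entries])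
  hence "(G \<longlongrightarrow> L) F" by (intro vec_tendstoI) simp
  thus ?thesis by blast
qed

lemma loewner_le_if_tendsto:
  assumes F: "F \<noteq> bot" and GL: "(G \<longlongrightarrow> L) F" and hX: "hermitian X"
    and ev: "\<And>w. eventually (\<lambda>e. hermitian (G e) \<and> qform X w \<le> qform (G e) w) F"
  shows "loewner_le X L"
  unfolding loewner_le_def psd_iff_cinner
proof (intro allI conjI)
  fix w
  have lim: "((\<lambda>e. cinner w (G e *v w)) \<longlongrightarrow> cinner w (L *v w)) F"
    by (rule cinner_matrix_tendsto[OF GL])
  have ev': "eventually (\<lambda>e. Im (cinner w (G e *v w)) = 0 \<and> qform X w \<le> Re (cinner w (G e *v w))) F"
    using ev[of w] by eventually_elim (simp add: hermitian_Im_cinner qform_def)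
  have "eventually (\<lambda>e. 0 = Im (cinner w (G e *v w))) F" using ev' by eventually_elim simp
  hence "((\<lambda>e. Im (cinner w (G e *v w))) \<longlongrightarrow> 0) F" by (rule Lim_transform_eventually[OF tendsto_const])
  hence "Im (cinner w (L *v w)) = 0" using tendsto_unique[OF F tendsto_Im[OF lim]] by blast
  thus "Im (cinner w ((L - X) *v w)) = 0"
    using hermitian_Im_cinner[OF hX] by (simp add: matrix_vector_mult_diff_rdistrib cinner_diff_right)
  have "qform X w \<le> Re (cinner w (L *v w))"
    by (rule tendsto_lowerbound[OF tendsto_Re[OF lim] _ F]) (use ev' in \<open>auto elim: eventually_mono\<close>)
  thus "0 \<le> qform (L - X) w" by (simp add: qform_diff) (simp add: qform_def)
qed

lemma loewner_le_gmean:
  fixes A B X :: "complex^'n^'n"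
  assumes hA: "hermitian A" and hB: "hermitian B"
    and Apos: "\<forall>x. 0 \<le> qform A x" and Bpos: "\<forall>x. 0 \<le> qform B x"
    and hX: "hermitian X" and bX: "block_psd A B X"
  shows "loewner_le X (gmean A B)"
proof -
  define G where "G e = gmean_pd (A + e *\<^sub>R mat 1) (B + e *\<^sub>R mat 1)" for e :: real
  note bounds = qform_gmean_pd_shift[OF hA hB Apos Bpos hX bX, folded G_def]
  have hG: "hermitian (G e)" if "0 < e" for e
    unfolding G_def using that
    by (intro hermitian_gmean_pd hermitian_shift mspec_shift_pos qform_shift_nonneg hA hB Apos Bpos)
  have ev: "eventually (\<lambda>e. hermitian (G e) \<and> qform X w \<le> qform (G e) w) (at_right 0)" for w
    using eventually_at_right_less[of 0] by eventually_elim (use hG bounds(1) in auto)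
  have "\<exists>c. ((\<lambda>e. cinner w (G e *v w)) \<longlongrightarrow> c) (at_right 0)" for w
  proof -
    have "((\<lambda>e. qform (G e) w) \<longlongrightarrow> Inf ((\<lambda>e. qform (G e) w) ` ({0<..} \<inter> UNIV)))
        (at 0 within ({0<..} \<inter> UNIV))"
      by (rule Lim_right_bound[where K = "qform X w"]) (auto intro: bounds)
    then obtain l where "((\<lambda>e. qform (G e) w) \<longlongrightarrow> l) (at_right 0)" by auto
    hence "((\<lambda>e. complex_of_real (qform (G e) w)) \<longlongrightarrow> complex_of_real l) (at_right 0)"
      by (rule tendsto_of_real)
    moreover have "eventually (\<lambda>e. complex_of_real (qform (G e) w) = cinner w (G e *v w)) (at_right 0)"
      using ev[of w] by eventually_elim (simp add: qform_def complex_eq_iff hermitian_Im_cinner)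
    ultimately show ?thesis by (blast intro: Lim_transform_eventually)
  qed
  then obtain L where GL: "(G \<longlongrightarrow> L) (at_right 0)" using tendsto_matrix_if_tendsto_cinner by blast
  have "gmean A B = L"
    unfolding gmean_def G_def[symmetric] by (rule tendsto_Lim[OF trivial_limit_at_right_real GL])
  thus ?thesis using loewner_le_if_tendsto[OF trivial_limit_at_right_real GL hX ev] by simp
qed

section \<open>Real and imaginary parts\<close>

text \<open>\<open>abs_mean F T = (F(T\<^sup>*T) + F(TT\<^sup>*))/2\<close>; with \<open>F(s) = f(\<surd>s)\<^sup>2\<close> this is
  \<open>(f\<^sup>2(|T|) + f\<^sup>2(|T\<^sup>*|))/2\<close>.\<close>

definition abs_mean :: "(real \<Rightarrow> real) \<Rightarrow> complex^'n^'n \<Rightarrow> complex^'n^'n" where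
  "abs_mean F T = (1/2) *\<^sub>R (matfun F (cadj T ** T) + matfun F (T ** cadj T))"

lemma hermitian_abs_mean: "hermitian (abs_mean F T)"
  unfolding abs_mean_def
  by (intro hermitian_scaleR hermitian_add hermitian_matfun hermitian_cadj_mult hermitian_mult_cadj)

lemma qform_abs_mean_nonneg:
  assumes "\<forall>s\<ge>0. 0 \<le> F s"
  shows "0 \<le> qform (abs_mean F T) x"
proof -
  have "0 \<le> qform (matfun F (cadj T ** T)) x"
    using assms mspec_cadj_mult_nonneg by (intro qform_matfun_nonneg[OF hermitian_cadj_mult]) blast
  moreover have "0 \<le> qform (matfun F (T ** cadj T)) x"
    using assms mspec_mult_cadj_nonneg by (intro qform_matfun_nonneg[OF hermitian_mult_cadj]) blast
  ultimately show ?thesis by (simp add: abs_mean_def qform_scaleR qform_add)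
qed

lemma abs_mean_mabs: "abs_mean sqrt T = (1/2) *\<^sub>R (mabs T + mabs (cadj T))"
  by (simp add: abs_mean_def mabs_def)

lemma re_part_eq: "re_part T = (1/2) *\<^sub>R (T + cadj T)"
  by (simp add: re_part_def cadj_def vec_eq_iff matrix_scaleR_nth del: vector_scaleR_component)

lemma hermitian_re_part: "hermitian (re_part T)"
  unfolding re_part_eq by (intro hermitian_scaleR) (simp add: hermitian_def cadj_add add.commute)

lemma block_psd_re_part:
  fixes T :: "complex^'n^'n"
  assumes FG: "\<forall>s\<ge>0. 0 \<le> F s \<and> 0 \<le> G s \<and> F s * G s = s"
  shows "block_psd (abs_mean F T) (abs_mean G T) (re_part T)"
  unfolding block_psd_def
proof (intro allI)
  fix u v
  have "0 \<le> qform (matfun F (cadj T ** T)) u + 2 * Re (cinner v (T *v u))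
      + qform (matfun G (T ** cadj T)) v"
    using block_psd_matfun_abs[OF FG] unfolding block_psd_def by blast
  moreover have "0 \<le> qform (matfun F (T ** cadj T)) u + 2 * Re (cinner v (cadj T *v u))
      + qform (matfun G (cadj T ** T)) v"
    using block_psd_matfun_abs[OF FG, of "cadj T"] unfolding block_psd_def by simp
  ultimately show "0 \<le> qform (abs_mean F T) u + 2 * Re (cinner v (re_part T *v u))
      + qform (abs_mean G T) v"
    by (simp add: abs_mean_def qform_scaleR qform_add re_part_eq matrix_vector_mult_scaleR
        cinner_scaleR_right matrix_vector_mult_add_rdistrib cinner_add_right) argo
qed

lemma loewner_le_gmean_re_part:
  fixes T :: "complex^'n^'n"
  assumes FG: "\<forall>s\<ge>0. 0 \<le> F s \<and> 0 \<le> G s \<and> F s * G s = s"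
  shows "loewner_le (re_part T) (gmean (abs_mean F T) (abs_mean G T))"
    and "loewner_le (- re_part T) (gmean (abs_mean F T) (abs_mean G T))"
proof -
  note gm = loewner_le_gmean[OF hermitian_abs_mean hermitian_abs_mean allI allI]
  have "\<forall>s\<ge>0. 0 \<le> F s" "\<forall>s\<ge>0. 0 \<le> G s" using FG by simp_all
  note pos = this[THEN qform_abs_mean_nonneg]
  show "loewner_le (re_part T) (gmean (abs_mean F T) (abs_mean G T))"
    by (rule gm[OF pos hermitian_re_part block_psd_re_part[OF FG]])
  show "loewner_le (- re_part T) (gmean (abs_mean F T) (abs_mean G T))"
    by (rule gm[OF pos hermitian_uminus[OF hermitian_re_part] block_psd_uminus[OF block_psd_re_part[OF FG]]])
qed

lemma loewner_le_abs_mean_re_part: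
  fixes T :: "complex^'n^'n"
  shows "loewner_le (re_part T) (abs_mean sqrt T)" and "loewner_le (- re_part T) (abs_mean sqrt T)"
proof -
  have b: "block_psd (abs_mean sqrt T) (abs_mean sqrt T) (re_part T)"
    by (rule block_psd_re_part) simp
  show "loewner_le (re_part T) (abs_mean sqrt T)"
    by (rule loewner_le_if_block_psd_diag[OF hermitian_re_part hermitian_abs_mean b])
  show "loewner_le (- re_part T) (abs_mean sqrt T)"
    by (rule loewner_le_if_block_psd_diag[OF hermitian_uminus[OF hermitian_re_part]
          hermitian_abs_mean block_psd_uminus[OF b]])
qed

lemma im_part_eq_re_part: "im_part T = re_part (mat (- \<i>) ** T)"
proof -
  have "(a - cnj b) / (2 * \<i>) = (- \<i> * a + cnj (- \<i> * b)) / 2" for a b :: complex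
    by (simp add: field_simps)
  thus ?thesis by (simp add: im_part_def re_part_def mat_mult_left vec_eq_iff)
qed

lemma cadj_mult_unimodular:
  assumes "cnj c * c = 1"
  shows "cadj (mat c ** T) ** (mat c ** T) = cadj T ** T"
    and "(mat c ** T) ** cadj (mat c ** T) = T ** cadj T"
proof -
  have "cadj (mat c ** T) ** (mat c ** T) = cadj T ** (mat (cnj c) ** mat c) ** T"
    by (simp add: cadj_mult cadj_mat matrix_mul_assoc)
  thus "cadj (mat c ** T) ** (mat c ** T) = cadj T ** T" using assms by (simp add: mat_mult_mat)
  have "(mat c ** T) ** cadj (mat c ** T) = mat c ** ((T ** cadj T) ** mat (cnj c))"
    by (simp add: cadj_mult cadj_mat matrix_mul_assoc)
  also have "\<dots> = (mat c ** mat (cnj c)) ** (T ** cadj T)"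
    by (subst mat_mult_commute[of "cnj c", symmetric]) (simp only: matrix_mul_assoc)
  finally show "(mat c ** T) ** cadj (mat c ** T) = T ** cadj T"
    using assms by (simp add: mat_mult_mat mult.commute)
qed

lemma abs_mean_unimodular_mult: "cnj c * c = 1 \<Longrightarrow> abs_mean F (mat c ** T) = abs_mean F T"
  by (simp add: abs_mean_def cadj_mult_unimodular)

lemma matfun_mabs: "matfun h (mabs T) = matfun (\<lambda>s. h (sqrt s)) (cadj T ** T)"
  unfolding mabs_def by (rule matfun_matfun[OF hermitian_cadj_mult])

theorem mainTheorem16:
  fixes T :: "complex^'n^'n" and f g :: "real \<Rightarrow> real"
  assumes "continuous_on {0..} f" and "continuous_on {0..} g"
    and "\<forall>t\<ge>0. f t \<ge> 0" and "\<forall>t\<ge>0. g t \<ge> 0"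
    and "\<forall>t\<ge>0. f t * g t = t"
  shows "loewner_le (re_part T)
           (gmean ((1/2) *\<^sub>R (matfun (\<lambda>t. (f t)^2) (mabs T) + matfun (\<lambda>t. (f t)^2) (mabs (cadj T))))
                  ((1/2) *\<^sub>R (matfun (\<lambda>t. (g t)^2) (mabs T) + matfun (\<lambda>t. (g t)^2) (mabs (cadj T)))))
       \<and> loewner_le (- re_part T)
           (gmean ((1/2) *\<^sub>R (matfun (\<lambda>t. (f t)^2) (mabs T) + matfun (\<lambda>t. (f t)^2) (mabs (cadj T))))
                  ((1/2) *\<^sub>R (matfun (\<lambda>t. (g t)^2) (mabs T) + matfun (\<lambda>t. (g t)^2) (mabs (cadj T)))))
       \<and> loewner_le (im_part T)
           (gmean ((1/2) *\<^sub>R (matfun (\<lambda>t. (f t)^2) (mabs T) + matfun (\<lambda>t. (f t)^2) (mabs (cadj T))))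
                  ((1/2) *\<^sub>R (matfun (\<lambda>t. (g t)^2) (mabs T) + matfun (\<lambda>t. (g t)^2) (mabs (cadj T)))))
       \<and> loewner_le (- im_part T)
           (gmean ((1/2) *\<^sub>R (matfun (\<lambda>t. (f t)^2) (mabs T) + matfun (\<lambda>t. (f t)^2) (mabs (cadj T))))
                  ((1/2) *\<^sub>R (matfun (\<lambda>t. (g t)^2) (mabs T) + matfun (\<lambda>t. (g t)^2) (mabs (cadj T)))))
       \<and> loewner_le (re_part T) ((1/2) *\<^sub>R (mabs T + mabs (cadj T)))
       \<and> loewner_le (- re_part T) ((1/2) *\<^sub>R (mabs T + mabs (cadj T)))
       \<and> loewner_le (im_part T) ((1/2) *\<^sub>R (mabs T + mabs (cadj T)))
       \<and> loewner_le (- im_part T) ((1/2) *\<^sub>R (mabs T + mabs (cadj T)))"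
proof -
  define F where "F s = (f (sqrt s))^2" for s
  define G where "G s = (g (sqrt s))^2" for s
  have "F s * G s = (f (sqrt s) * g (sqrt s))^2" for s by (simp add: F_def G_def power_mult_distrib)
  hence FG: "\<forall>s\<ge>0. 0 \<le> F s \<and> 0 \<le> G s \<and> F s * G s = s" using assms(5) by (simp add: F_def G_def)
  have eqs: "(1/2) *\<^sub>R (matfun (\<lambda>t. (f t)^2) (mabs T) + matfun (\<lambda>t. (f t)^2) (mabs (cadj T)))
      = abs_mean F T"
    "(1/2) *\<^sub>R (matfun (\<lambda>t. (g t)^2) (mabs T) + matfun (\<lambda>t. (g t)^2) (mabs (cadj T)))
      = abs_mean G T"
    by (simp_all add: abs_mean_def matfun_mabs F_def[abs_def] G_def[abs_def])
  have rot: "abs_mean H (mat (- \<i>) ** T) = abs_mean H T" for H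
    by (simp add: abs_mean_unimodular_mult)
  show ?thesis
    unfolding eqs abs_mean_mabs[symmetric] im_part_eq_re_part
    using loewner_le_gmean_re_part[OF FG, of T] loewner_le_abs_mean_re_part[of T]
      loewner_le_gmean_re_part[OF FG, of "mat (- \<i>) ** T"]
      loewner_le_abs_mean_re_part[of "mat (- \<i>) ** T"]
    unfolding rot by blast
qed
end
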